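(* Let $M\subset\mathbb{R}^{m+1}$ be an entire graphical translating soliton, i.e. the graph of a smooth function $u:\mathbb{R}^m\to\mathbb{R}$ which is a translating soliton with velocity $\operatorname{e}_{m+1}$. Suppose there are constants $C>0$, $r>0$ and $\alpha$ such that $|u(x)|\le C|x|^\alpha$ for all $x\in\mathbb{R}^m$ with $|x|\ge r$. Then $\alpha\ge2$.
   Context: A translating soliton is an oriented hypersurface whose scalar mean curvature satisfies $H=-\langle\operatorname{e}_{m+1},\xi\rangle$ ($\xi$ the unit normal), equivalently its mean curvature vector equals the normal projection of $\operatorname{e}_{m+1}$. *)

theory Defs
  imports "HOL-Analysis.Analysis"
begin

text \<open>Points of R^m are vectors of type real^'m, where 'm is a finite type with CARD('m) = m.\<close>

definition partial :: "'m::finite \<Rightarrow> (real^'m \<Rightarrow> real) \<Rightarrow> real^'m \<Rightarrow> real" where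
  "partial i f x = deriv (\<lambda>t. f (x + t *\<^sub>R axis i 1)) 0"

definition iter_partial :: "'m::finite list \<Rightarrow> (real^'m \<Rightarrow> real) \<Rightarrow> real^'m \<Rightarrow> real" where
  "iter_partial is f = foldr (\<lambda>i g. partial i g) is f"

definition smooth :: "(real^'m::finite \<Rightarrow> real) \<Rightarrow> bool" where
  "smooth f \<longleftrightarrow> (\<forall>is. (iter_partial is f) differentiable_on UNIV)"

definition grad :: "(real^'m::finite \<Rightarrow> real) \<Rightarrow> real^'m \<Rightarrow> real^'m" where
  "grad f x = (\<chi> i. partial i f x)"

definition divergence :: "(real^'m::finite \<Rightarrow> real^'m) \<Rightarrow> real^'m \<Rightarrow> real" where
  "divergence V x = (\<Sum>i\<in>UNIV. partial i (\<lambda>y. V y $ i) x)"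

text \<open>The graph of u is a translating soliton with velocity e_{m+1}:
  with upward unit normal xi = (-Du, 1)/W, W = sqrt(1+|Du|^2), the mean curvature is
  H = div(Du/W) and the condition H = <e_{m+1}, xi> reads div(Du/W) = 1/W.
  (The opposite sign convention amounts to replacing u by -u.)\<close>
definition graphical_translator :: "(real^'m::finite \<Rightarrow> real) \<Rightarrow> bool" where
  "graphical_translator u \<longleftrightarrow>
     (\<forall>x. divergence (\<lambda>y. (1 / sqrt (1 + (norm (grad u y))\<^sup>2)) *\<^sub>R grad u y) x
          = 1 / sqrt (1 + (norm (grad u x))\<^sup>2))"

end

theory Submission
  imports Defs
begin

text \<open>Suppose \<open>\<alpha> < 2\<close>. Then for every \<open>\<epsilon> > 0\<close> the function \<open>u x - \<epsilon> |x|\<^sup>2\<close> tends to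
  \<open>-\<infinity>\<close> and attains a global maximum at some \<open>x\<^sub>0\<close>, where the Hessian satisfies \<open>D\<^sup>2u \<le> 2\<epsilon> I\<close>.
  In non-divergence form the translator equation reads \<open>a\<^sub>i\<^sub>j u\<^sub>i\<^sub>j = 1\<close> with
  \<open>a = I - Du Du\<^sup>T / (1 + |Du|\<^sup>2)\<close>, a positive definite matrix of trace at most \<open>m\<close>; hence at \<open>x\<^sub>0\<close>
  its left-hand side is at most \<open>2\<epsilon>m\<close>, which is absurd for \<open>\<epsilon> < 1/(2m)\<close>.\<close>

lemma has_real_derivative_along_line_of_has_derivative:
  fixes g :: "real^'m::finite \<Rightarrow> real"
  assumes "(g has_derivative D) (at (y + s *\<^sub>R w))"
  shows "((\<lambda>t. g (y + t *\<^sub>R w)) has_real_derivative D w) (at s)"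
proof -
  have "((\<lambda>t. y + t *\<^sub>R w) has_derivative (\<lambda>t. t *\<^sub>R w)) (at s)"
    by (auto intro!: derivative_eq_intros)
  from has_derivative_compose[OF this assms]
  have "((\<lambda>t. g (y + t *\<^sub>R w)) has_derivative (\<lambda>t. D (t *\<^sub>R w))) (at s)" .
  moreover have "(\<lambda>t. D (t *\<^sub>R w)) = (*) (D w)"
    using has_derivative_linear[OF assms] by (auto simp: linear_scale)
  ultimately show ?thesis by (simp add: has_field_derivative_def)
qed

lemma partial_eq_derivative_axis:
  fixes g :: "real^'m::finite \<Rightarrow> real"
  assumes "(g has_derivative D) (at y)"
  shows "partial i g y = D (axis i 1)"
  unfolding partial_def
  by (rule DERIV_imp_deriv, rule has_real_derivative_along_line_of_has_derivative) (use assms in simp)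

lemma has_real_derivative_along_line:
  fixes g :: "real^'m::finite \<Rightarrow> real"
  assumes "g differentiable (at (y + s *\<^sub>R w))"
  shows "((\<lambda>t. g (y + t *\<^sub>R w)) has_real_derivative (\<Sum>i\<in>UNIV. w$i * partial i g (y + s *\<^sub>R w))) (at s)"
proof -
  obtain D where D: "(g has_derivative D) (at (y + s *\<^sub>R w))"
    using assms by (auto simp: differentiable_def)
  have "D w = D (\<Sum>i\<in>UNIV. w$i *\<^sub>R axis i 1)"
    using basis_expansion[of w] by (simp add: scalar_mult_eq_scaleR)
  also have "\<dots> = (\<Sum>i\<in>UNIV. w$i * partial i g (y + s *\<^sub>R w))"
    using has_derivative_linear[OF D]
    by (simp add: linear_sum linear_scale partial_eq_derivative_axis[OF D])
  finally show ?thesis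
    using has_real_derivative_along_line_of_has_derivative[OF D] by simp
qed

lemma partial_has_real_derivative:
  fixes g :: "real^'m::finite \<Rightarrow> real"
  assumes "g differentiable (at y)"
  shows "((\<lambda>t. g (y + t *\<^sub>R axis i 1)) has_real_derivative partial i g y) (at 0)"
proof -
  obtain D where D: "(g has_derivative D) (at y)"
    using assms by (auto simp: differentiable_def)
  show ?thesis
    using has_real_derivative_along_line_of_has_derivative[of g D y 0] D
    by (simp add: partial_eq_derivative_axis[OF D])
qed

lemma second_derivative_nonpos_at_max:
  fixes h h' :: "real \<Rightarrow> real"
  assumes h': "\<And>t. (h has_real_derivative h' t) (at t)"
    and h'': "(h' has_real_derivative c) (at 0)"
    and max: "\<And>t. h t \<le> h 0"
  shows "c \<le> 0"
proof (rule ccontr)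
  assume "\<not> c \<le> 0"
  then obtain e where e: "e > 0" "\<And>k. 0 < k \<Longrightarrow> k < e \<Longrightarrow> h' 0 < h' k"
    using DERIV_pos_inc_right[OF h''] by force
  have "h' 0 = 0"
    by (rule DERIV_local_max[OF h', of 1]) (use max in auto)
  obtain z where z: "0 < z" "z < e / 2" "h (e / 2) - h 0 = e / 2 * h' z"
    using MVT2[of 0 "e / 2" h h'] h' e(1) by auto
  have "h' z > 0"
    using e z \<open>h' 0 = 0\<close> by force
  with e(1) z(3) have "h (e / 2) - h 0 > 0"
    by (simp only:) (simp add: mult_pos_pos)
  with max show False by (simp add: not_le[symmetric])
qed

definition quadratic_form :: "('n::finite \<Rightarrow> 'n \<Rightarrow> real) \<Rightarrow> ('n \<Rightarrow> real) \<Rightarrow> real" where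
  "quadratic_form A w = (\<Sum>i\<in>UNIV. \<Sum>j\<in>UNIV. w i * w j * A i j)"

lemma quadratic_form_two_axes:
  fixes A :: "'n::finite \<Rightarrow> 'n \<Rightarrow> real"
  shows "quadratic_form A (\<lambda>k. (if k = i then a else 0) + (if k = j then b else 0))
    = a\<^sup>2 * A i i + a * b * (A i j + A j i) + b\<^sup>2 * A j j"
proof -
  have row: "(\<Sum>l\<in>UNIV. ((if l = i then a else 0) + (if l = j then b else 0)) * f l) = a * f i + b * f j"
    for f :: "'n \<Rightarrow> real"
    by (simp add: distrib_right sum.distrib if_distrib[where f="\<lambda>c. c * _"] cong: if_cong)
  have "quadratic_form A (\<lambda>k. (if k = i then a else 0) + (if k = j then b else 0))
    = (\<Sum>k\<in>UNIV. ((if k = i then a else 0) + (if k = j then b else 0)) * (a * A k i + b * A k j))"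
    unfolding quadratic_form_def
    by (simp add: mult.assoc sum_distrib_left[symmetric] row)
  also have "\<dots> = a * (a * A i i + b * A i j) + b * (a * A j i + b * A j j)"
    by (rule row)
  finally show ?thesis by (simp add: power2_eq_square algebra_simps)
qed

lemma quadratic_form_nonneg_imp_diag_nonneg:
  assumes "\<forall>w. 0 \<le> quadratic_form A w"
  shows "0 \<le> A i i"
proof -
  have "0 \<le> quadratic_form A (\<lambda>k. (if k = i then 1 else 0) + (if k = i then 0 else 0))"
    using assms by blast
  then show ?thesis
    unfolding quadratic_form_two_axes by simp
qed

lemma quadratic_form_le_trace:
  fixes A :: "'n::finite \<Rightarrow> 'n \<Rightarrow> real"
  assumes psd: "\<forall>w. 0 \<le> quadratic_form A w"
  shows "quadratic_form A v \<le> (\<Sum>i\<in>UNIV. (v i)\<^sup>2) * (\<Sum>i\<in>UNIV. A i i)"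
proof -
  define S where "S = (\<Sum>i\<in>UNIV. (v i)\<^sup>2)"
  define T where "T = (\<Sum>i\<in>UNIV. A i i)"
  have pair: "v i * v j * (A i j + A j i) \<le> (v j)\<^sup>2 * A i i + (v i)\<^sup>2 * A j j" for i j
  proof -
    have "0 \<le> quadratic_form A (\<lambda>k. (if k = i then v j else 0) + (if k = j then - v i else 0))"
      using psd by blast
    then show ?thesis
      unfolding quadratic_form_two_axes by (simp add: power2_eq_square algebra_simps)
  qed
  have "(\<Sum>i\<in>UNIV. \<Sum>j\<in>UNIV. v i * v j * A j i) = quadratic_form A v"
    unfolding quadratic_form_def by (subst sum.swap) (simp add: ac_simps)
  then have "2 * quadratic_form A v = (\<Sum>i\<in>UNIV. \<Sum>j\<in>UNIV. v i * v j * (A i j + A j i))"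
    by (simp add: distrib_left sum.distrib quadratic_form_def)
  also have "\<dots> \<le> (\<Sum>i\<in>UNIV. \<Sum>j\<in>UNIV. (v j)\<^sup>2 * A i i + (v i)\<^sup>2 * A j j)"
    by (intro sum_mono pair)
  also have "\<dots> = (\<Sum>i\<in>UNIV. S * A i i + (v i)\<^sup>2 * T)"
    by (simp add: S_def T_def sum.distrib sum_distrib_left sum_distrib_right)
  also have "\<dots> = S * T + S * T"
    by (simp only: sum.distrib sum_distrib_left[symmetric] sum_distrib_right[symmetric]
        S_def[symmetric] T_def[symmetric])
  finally have "quadratic_form A v \<le> S * T" by simp
  then show ?thesis unfolding S_def T_def .
qed

text \<open>The left-hand side is \<open>tr(a D)\<close> for \<open>a = I - v v\<^sup>T / (1 + |v|\<^sup>2)\<close>.\<close>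

lemma trace_sub_quadratic_form_le:
  fixes D :: "'n::finite \<Rightarrow> 'n \<Rightarrow> real"
  assumes D: "\<forall>w. quadratic_form D w \<le> c * (\<Sum>i\<in>UNIV. (w i)\<^sup>2)" and "0 \<le> c"
  shows "(\<Sum>i\<in>UNIV. D i i) - quadratic_form D v / (1 + (\<Sum>i\<in>UNIV. (v i)\<^sup>2)) \<le> c * CARD('n)"
proof -
  define A where "A = (\<lambda>i j. (if i = j then c else 0) - D i j)"
  define S where "S = (\<Sum>i\<in>UNIV. (v i)\<^sup>2)"
  define trD where "trD = (\<Sum>i\<in>UNIV. D i i)"
  have A_form: "quadratic_form A w = c * (\<Sum>i\<in>UNIV. (w i)\<^sup>2) - quadratic_form D w" for w
  proof -
    have "(\<Sum>j\<in>UNIV. w i * w j * A i j) = c * (w i)\<^sup>2 - (\<Sum>j\<in>UNIV. w i * w j * D i j)" for i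
      by (simp add: A_def right_diff_distrib sum_subtractf power2_eq_square
          if_distrib[where f="\<lambda>x. _ * x"] cong: if_cong)
    then show ?thesis
      by (simp add: quadratic_form_def sum_subtractf sum_distrib_left)
  qed
  have A_psd: "\<forall>w. 0 \<le> quadratic_form A w"
    using D by (simp add: A_form)
  have trace_A: "(\<Sum>i\<in>UNIV. A i i) = c * CARD('n) - trD"
    by (simp add: A_def trD_def sum_subtractf)
  have "trD \<le> c * CARD('n)"
    using quadratic_form_nonneg_imp_diag_nonneg[OF A_psd] trace_A by (metis sum_nonneg diff_ge_0_iff_ge)
  moreover have "c * S - quadratic_form D v \<le> S * (c * CARD('n) - trD)"
    using quadratic_form_le_trace[OF A_psd, of v] by (simp add: A_form S_def trace_A)
  moreover have "0 \<le> S" "0 \<le> c * S"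
    using \<open>0 \<le> c\<close> by (simp_all add: S_def sum_nonneg)
  ultimately have "trD * (1 + S) - quadratic_form D v \<le> c * CARD('n) * (1 + S)"
    by (simp add: algebra_simps)
  moreover have "1 + S > 0"
    using \<open>0 \<le> S\<close> by simp
  ultimately show ?thesis
    by (simp add: trD_def S_def field_simps)
qed

definition hessian :: "(real^'m::finite \<Rightarrow> real) \<Rightarrow> real^'m \<Rightarrow> 'm \<Rightarrow> 'm \<Rightarrow> real" where
  "hessian u x i j = partial i (partial j u) x"

lemma norm_vec_squared: "(norm (z::real^'m::finite))\<^sup>2 = (\<Sum>j\<in>UNIV. (z$j)\<^sup>2)"
  by (simp only: power2_norm_eq_inner) (simp add: inner_vec_def power2_eq_square)

lemma has_real_derivative_normalized_component:
  fixes G :: "'m::finite \<Rightarrow> real \<Rightarrow> real"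
  assumes "\<And>j. (G j has_real_derivative G' j) (at 0)"
  defines "W \<equiv> sqrt (1 + (\<Sum>j\<in>UNIV. (G j 0)\<^sup>2))"
  shows "((\<lambda>t. G i t / sqrt (1 + (\<Sum>j\<in>UNIV. (G j t)\<^sup>2))) has_real_derivative
     G' i / W - G i 0 * (\<Sum>j\<in>UNIV. G j 0 * G' j) / W ^ 3) (at 0)"
proof -
  define X where "X = 1 + (\<Sum>j\<in>UNIV. (G j 0)\<^sup>2)"
  have "X > 0" unfolding X_def by (simp add: add_pos_nonneg sum_nonneg)
  have "sqrt X ^ 3 = X * sqrt X"
    using \<open>X > 0\<close> by (simp add: power3_eq_cube power2_eq_square[symmetric])
  moreover have "(\<Sum>j\<in>UNIV. 2 * (G' j * G j 0)) = 2 * (\<Sum>j\<in>UNIV. G j 0 * G' j)"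
    by (simp add: sum_distrib_left ac_simps)
  ultimately show ?thesis
    using \<open>X > 0\<close> unfolding W_def X_def[symmetric]
    apply (auto intro!: derivative_eq_intros assms simp: X_def[symmetric])
    by (simp add: field_simps)
qed

lemma graphical_translator_hessian_equation:
  fixes u :: "real^'m::finite \<Rightarrow> real"
  assumes "graphical_translator u" and "\<And>j. partial j u differentiable (at x)"
  shows "(\<Sum>i\<in>UNIV. hessian u x i i) - quadratic_form (hessian u x) (\<lambda>i. partial i u x)
      / (1 + (\<Sum>i\<in>UNIV. (partial i u x)\<^sup>2)) = 1"
proof -
  define D where "D = hessian u x"
  define v where "v = (\<lambda>j. partial j u x)"
  define S where "S = (\<Sum>i\<in>UNIV. (v i)\<^sup>2)"
  define W where "W = sqrt (1 + S)"
  have "S \<ge> 0" by (simp add: S_def sum_nonneg)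
  then have "W > 0" "W\<^sup>2 = 1 + S" by (simp_all add: W_def)
  have component: "partial i (\<lambda>y. ((1 / sqrt (1 + (norm (grad u y))\<^sup>2)) *\<^sub>R grad u y) $ i) x
      = D i i / W - v i * (\<Sum>j\<in>UNIV. v j * D i j) / W ^ 3" for i
  proof -
    define G where "G = (\<lambda>j t. partial j u (x + t *\<^sub>R axis i 1))"
    have "((\<lambda>t. G i t / sqrt (1 + (\<Sum>j\<in>UNIV. (G j t)\<^sup>2))) has_real_derivative
        D i i / W - v i * (\<Sum>j\<in>UNIV. v j * D i j) / W ^ 3) (at 0)"
      using has_real_derivative_normalized_component[of G "D i"]
        partial_has_real_derivative[OF assms(2)]
      by (simp add: G_def D_def hessian_def v_def W_def S_def)
    moreover have "(\<lambda>t. ((1 / sqrt (1 + (norm (grad u (x + t *\<^sub>R axis i 1)))\<^sup>2))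
        *\<^sub>R grad u (x + t *\<^sub>R axis i 1)) $ i)
      = (\<lambda>t. G i t / sqrt (1 + (\<Sum>j\<in>UNIV. (G j t)\<^sup>2)))"
      by (simp add: norm_vec_squared grad_def G_def)
    ultimately show ?thesis
      unfolding partial_def by (simp add: DERIV_imp_deriv)
  qed
  have W_grad: "sqrt (1 + (norm (grad u x))\<^sup>2) = W"
    by (simp add: norm_vec_squared grad_def W_def S_def v_def)
  have "divergence (\<lambda>y. (1 / sqrt (1 + (norm (grad u y))\<^sup>2)) *\<^sub>R grad u y) x
      = 1 / sqrt (1 + (norm (grad u x))\<^sup>2)"
    using assms(1) unfolding graphical_translator_def by blast
  then have "(\<Sum>i\<in>UNIV. D i i / W - v i * (\<Sum>j\<in>UNIV. v j * D i j) / W ^ 3) = 1 / W"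
    unfolding divergence_def component W_grad .
  moreover have "(\<Sum>i\<in>UNIV. D i i / W - v i * (\<Sum>j\<in>UNIV. v j * D i j) / W ^ 3)
      = ((\<Sum>i\<in>UNIV. D i i) - quadratic_form D v / W\<^sup>2) / W"
    by (simp add: quadratic_form_def sum_subtractf sum_divide_distrib sum_distrib_left
        diff_divide_distrib power2_eq_square power3_eq_cube ac_simps)
  ultimately have "(\<Sum>i\<in>UNIV. D i i) - quadratic_form D v / W\<^sup>2 = 1"
    using \<open>W > 0\<close> by simp
  then show ?thesis
    using \<open>W\<^sup>2 = 1 + S\<close> by (simp add: D_def v_def S_def)
qed

lemma powr_sub_square_eventually_less:
  fixes C \<alpha> \<epsilon> K :: real
  assumes "C > 0" "\<alpha> < 2" "\<epsilon> > 0"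
  shows "\<exists>T\<ge>1. \<forall>t\<ge>T. C * t powr \<alpha> - \<epsilon> * t\<^sup>2 < K"
proof -
  define \<delta> where "\<delta> = max \<alpha> 0"
  have \<delta>: "\<delta> < 2" "0 \<le> \<delta>" "\<alpha> \<le> \<delta>" using assms by (auto simp: \<delta>_def)
  define L where "L = (\<bar>K\<bar> + C + 1) / \<epsilon>"
  have "L > 0" using assms by (simp add: L_def)
  define T where "T = max 1 (L powr (1 / (2 - \<delta>)))"
  show ?thesis
  proof (intro exI[of _ T] conjI allI impI)
    show "1 \<le> T" by (simp add: T_def)
    fix t assume "T \<le> t"
    then have "1 \<le> t" "L powr (1 / (2 - \<delta>)) \<le> t" by (simp_all add: T_def)
    then have "(L powr (1 / (2 - \<delta>))) powr (2 - \<delta>) \<le> t powr (2 - \<delta>)"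
      using \<delta> \<open>L > 0\<close> by (intro powr_mono2) auto
    then have "L \<le> t powr (2 - \<delta>)" using \<delta> \<open>L > 0\<close> by (simp add: powr_powr)
    then have "\<bar>K\<bar> + C + 1 \<le> \<epsilon> * t powr (2 - \<delta>)"
      using assms(3) by (simp add: L_def field_simps)
    moreover have "t powr \<alpha> \<le> t powr \<delta>" "1 \<le> t powr \<delta>"
      using \<open>1 \<le> t\<close> \<delta> by (simp_all add: powr_mono ge_one_powr_ge_zero)
    moreover have "t\<^sup>2 = t powr \<delta> * t powr (2 - \<delta>)"
      using \<open>1 \<le> t\<close> by (simp add: powr_add[symmetric] powr_numeral)
    ultimately have "C * t powr \<alpha> - \<epsilon> * t\<^sup>2 \<le> t powr \<delta> * (C - \<epsilon> * t powr (2 - \<delta>))"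
      using assms(1) by (simp add: algebra_simps)
    also have "\<dots> \<le> t powr \<delta> * (- \<bar>K\<bar> - 1)"
      using \<open>\<bar>K\<bar> + C + 1 \<le> \<epsilon> * t powr (2 - \<delta>)\<close> by (intro mult_left_mono) auto
    also have "\<dots> \<le> - \<bar>K\<bar> - 1"
      using \<open>1 \<le> t powr \<delta>\<close> mult_right_mono_neg[of 1 "t powr \<delta>" "- \<bar>K\<bar> - 1"] by simp
    finally show "C * t powr \<alpha> - \<epsilon> * t\<^sup>2 < K" by linarith
  qed
qed

lemma continuous_attains_max_of_less_outside_ball:
  fixes f :: "'a::euclidean_space \<Rightarrow> real"
  assumes "continuous_on UNIV f" and "\<And>x. norm x \<ge> R \<Longrightarrow> f x < f 0"
  shows "\<exists>x\<^sub>0. \<forall>x. f x \<le> f x\<^sub>0"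
proof -
  have "continuous_on (cball 0 \<bar>R\<bar>) f"
    using assms(1) by (rule continuous_on_subset) simp
  then obtain x\<^sub>0 where x\<^sub>0: "\<forall>y\<in>cball 0 \<bar>R\<bar>. f y \<le> f x\<^sub>0"
    using continuous_attains_sup[OF compact_cball] by (metis abs_ge_zero cball_eq_empty not_le)
  then have "f 0 \<le> f x\<^sub>0" by simp
  have "f x \<le> f x\<^sub>0" for x
  proof (cases "norm x \<le> \<bar>R\<bar>")
    case True
    then show ?thesis using x\<^sub>0 by simp
  next
    case False
    then have "f x < f 0" using assms(2) by simp
    then show ?thesis using \<open>f 0 \<le> f x\<^sub>0\<close> by simp
  qed
  then show ?thesis by blast
qed

lemma sub_paraboloid_attains_max:
  fixes u :: "'a::euclidean_space \<Rightarrow> real"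
  assumes "continuous_on UNIV u" and "\<forall>x. norm x \<ge> r \<longrightarrow> u x \<le> C * norm x powr \<alpha>"
    and "C > 0" and "\<alpha> < 2" and "\<epsilon> > 0"
  shows "\<exists>x\<^sub>0. \<forall>x. u x - \<epsilon> * (norm x)\<^sup>2 \<le> u x\<^sub>0 - \<epsilon> * (norm x\<^sub>0)\<^sup>2"
proof -
  define f where "f = (\<lambda>x. u x - \<epsilon> * (norm x)\<^sup>2)"
  obtain T where T: "\<forall>t\<ge>T. C * t powr \<alpha> - \<epsilon> * t\<^sup>2 < f 0"
    using powr_sub_square_eventually_less[OF assms(3-5)] by blast
  have "f x < f 0" if "norm x \<ge> max r T" for x
    using assms(2) T that unfolding f_def by (smt (verit) max.bounded_iff)
  moreover have "continuous_on UNIV f"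
    unfolding f_def using assms(1) by (intro continuous_intros)
  ultimately show ?thesis
    using continuous_attains_max_of_less_outside_ball unfolding f_def by blast
qed

lemma hessian_le_at_max_of_sub_paraboloid:
  fixes u :: "real^'m::finite \<Rightarrow> real"
  assumes du: "\<And>x. u differentiable (at x)" and d2u: "\<And>j. partial j u differentiable (at x\<^sub>0)"
    and max: "\<And>x. u x - \<epsilon> * (norm x)\<^sup>2 \<le> u x\<^sub>0 - \<epsilon> * (norm x\<^sub>0)\<^sup>2"
  shows "quadratic_form (hessian u x\<^sub>0) w \<le> 2 * \<epsilon> * (\<Sum>i\<in>UNIV. (w i)\<^sup>2)"
proof -
  define y :: "real^'m" where "y = (\<chi> k. w k)"
  define h where "h = (\<lambda>t. u (x\<^sub>0 + t *\<^sub>R y) - \<epsilon> * (norm (x\<^sub>0 + t *\<^sub>R y))\<^sup>2)"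
  define h' where "h' = (\<lambda>t. (\<Sum>j\<in>UNIV. w j * partial j u (x\<^sub>0 + t *\<^sub>R y))
    - \<epsilon> * (2 * (x\<^sub>0 \<bullet> y) + 2 * t * (y \<bullet> y)))"
  have h_eq: "h = (\<lambda>t. u (x\<^sub>0 + t *\<^sub>R y) - \<epsilon> * (x\<^sub>0 \<bullet> x\<^sub>0 + 2 * t * (x\<^sub>0 \<bullet> y) + t\<^sup>2 * (y \<bullet> y)))"
    unfolding h_def power2_norm_eq_inner
    by (simp add: inner_add_left inner_add_right inner_commute power2_eq_square algebra_simps)
  have "(h has_real_derivative h' t) (at t)" for t
    using has_real_derivative_along_line[of u x\<^sub>0 t y] du unfolding h_eq h'_def
    by (auto intro!: derivative_eq_intros simp: y_def algebra_simps)
  moreover have "(h' has_real_derivative quadratic_form (hessian u x\<^sub>0) w - \<epsilon> * (2 * (y \<bullet> y))) (at 0)"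
  proof -
    have "((\<lambda>t. partial j u (x\<^sub>0 + t *\<^sub>R y)) has_real_derivative (\<Sum>i\<in>UNIV. w i * hessian u x\<^sub>0 i j)) (at 0)" for j
      using has_real_derivative_along_line[of "partial j u" x\<^sub>0 0 y] d2u
      by (simp add: y_def hessian_def)
    moreover have "(\<Sum>j\<in>UNIV. (\<Sum>i\<in>UNIV. w i * hessian u x\<^sub>0 i j) * w j) = quadratic_form (hessian u x\<^sub>0) w"
      unfolding quadratic_form_def by (subst sum.swap) (simp add: sum_distrib_left sum_distrib_right ac_simps)
    ultimately show ?thesis
      unfolding h'_def by (auto intro!: derivative_eq_intros DERIV_sum)
  qed
  moreover have "h t \<le> h 0" for t
    using max by (simp add: h_def)
  ultimately have "quadratic_form (hessian u x\<^sub>0) w - \<epsilon> * (2 * (y \<bullet> y)) \<le> 0"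
    by (rule second_derivative_nonpos_at_max)
  moreover have "y \<bullet> y = (\<Sum>i\<in>UNIV. (w i)\<^sup>2)"
    by (simp add: y_def inner_vec_def power2_eq_square)
  ultimately show ?thesis by simp
qed

lemma smooth_imp_differentiable: "smooth u \<Longrightarrow> u differentiable (at x)"
  unfolding smooth_def by (drule spec[of _ "[]"]) (simp add: iter_partial_def differentiable_on_def)

lemma smooth_imp_partial_differentiable: "smooth u \<Longrightarrow> partial j u differentiable (at x)"
  unfolding smooth_def by (drule spec[of _ "[j]"]) (simp add: iter_partial_def differentiable_on_def)

theorem mainTheorem7:
  fixes u :: "real^'m::finite \<Rightarrow> real" and C r \<alpha> :: real
  assumes "smooth u"
    and "graphical_translator u"
    and "C > 0" and "r > 0"
    and "\<forall>x. norm x \<ge> r \<longrightarrow> \<bar>u x\<bar> \<le> C * norm x powr \<alpha>"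
  shows "\<alpha> \<ge> 2"
proof (rule ccontr)
  assume "\<not> \<alpha> \<ge> 2"
  define \<epsilon> :: real where "\<epsilon> = 1 / (4 * CARD('m))"
  have "\<epsilon> > 0" by (simp add: \<epsilon>_def)
  have du: "u differentiable (at x)" and d2u: "partial j u differentiable (at x)" for x j
    using assms(1) by (simp_all add: smooth_imp_differentiable smooth_imp_partial_differentiable)
  then have "continuous_on UNIV u"
    by (simp add: differentiable_imp_continuous_within continuous_at_imp_continuous_on)
  moreover have "\<forall>x. norm x \<ge> r \<longrightarrow> u x \<le> C * norm x powr \<alpha>"
    using assms(5) by force
  ultimately obtain x\<^sub>0 where "\<forall>x. u x - \<epsilon> * (norm x)\<^sup>2 \<le> u x\<^sub>0 - \<epsilon> * (norm x\<^sub>0)\<^sup>2"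
    using sub_paraboloid_attains_max \<open>C > 0\<close> \<open>\<not> \<alpha> \<ge> 2\<close> \<open>\<epsilon> > 0\<close> by (metis not_le)
  then have "\<forall>w. quadratic_form (hessian u x\<^sub>0) w \<le> 2 * \<epsilon> * (\<Sum>i\<in>UNIV. (w i)\<^sup>2)"
    using hessian_le_at_max_of_sub_paraboloid du d2u by blast
  then have "(\<Sum>i\<in>UNIV. hessian u x\<^sub>0 i i) - quadratic_form (hessian u x\<^sub>0) (\<lambda>i. partial i u x\<^sub>0)
      / (1 + (\<Sum>i\<in>UNIV. (partial i u x\<^sub>0)\<^sup>2)) \<le> 2 * \<epsilon> * CARD('m)"
    using trace_sub_quadratic_form_le[where c = "2 * \<epsilon>"] \<open>\<epsilon> > 0\<close> by simp
  also have "\<dots> = 1 / 2"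
    by (simp add: \<epsilon>_def)
  finally show False
    using graphical_translator_hessian_equation[OF assms(2) d2u] by simp
qed

end
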